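(* Let $d\geq 1$, let $p_1<\dots<p_d$ be the first $d$ prime numbers, let $N\geq 1$ be an integer, let $C>0$, and let $p\geq 1$ be real. For $1\le k\le d$ let $\mathbf{b}_k\in\mathbb{R}^{d+1}$ be the vector with entry $(\ln p_k)^{1/p}$ in coordinate $k$, entry $C\ln p_k$ in coordinate $d+1$, and zeros elsewhere, and let $\mathbf{t}=(0,\dots,0,C\ln N)^T\in\mathbb{R}^{d+1}$. Define $D_0=1$ and $$D_j=1+C^2\sum_{i=1}^j(\ln p_i)^{2-2/p},\qquad 1\le j\le d.$$ Let $\mathbf{b}_1^\star,\dots,\mathbf{b}_d^\star,\mathbf{t}^\star$ be the Gram–Schmidt orthogonalization of the ordered family $(\mathbf{b}_1,\dots,\mathbf{b}_d,\mathbf{t})$. Then for $1\le k\le d$ and $1\le i\le d+1$, $$(\mathbf{b}_k^\star)_i=\begin{cases}-\dfrac{C^2\ln p_k(\ln p_i)^{1-1/p}}{D_{k-1}} & i<k,\\ (\ln p_k)^{1/p} & i=k,\\ 0 & k<i<d+1,\\ \dfrac{C\ln p_k}{D_{k-1}} & i=d+1,\end{cases}$$ and $$(\mathbf{t}^\star)_i=\begin{cases}-\dfrac{C^2(\ln N)(\ln p_i)^{1-1/p}}{D_d} & i<d+1,\\ \dfrac{C\ln N}{D_d} & i=d+1.\end{cases}$$ Moreover $\|\mathbf{b}_k^\star\|_2^2=(\ln p_k)^{2/p}\dfrac{D_k}{D_{k-1}}$ for $1\le k\le d$, $\|\mathbf{t}^\star\|_2^2=\dfrac{(C\ln N)^2}{D_d}$,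 and the orthogonal projection $\mathbf{t}-\mathbf{t}^\star$ of $\mathbf{t}$ onto the span of $\mathbf{b}_1,\dots,\mathbf{b}_d$ is given by $$(\mathbf{t}-\mathbf{t}^\star)_i=\begin{cases}\dfrac{C^2(\ln N)(\ln p_i)^{1-1/p}}{D_d} & i<d+1,\\ \dfrac{C(\ln N)(D_d-1)}{D_d} & i=d+1.\end{cases}$$
   Context: $\ln$ is the natural logarithm, $\|\cdot\|_2$ the Euclidean norm, and $(\mathbf{v})_i$ denotes the $i$-th coordinate of $\mathbf{v}$. Gram–Schmidt orthogonalization of $(\mathbf{v}_1,\dots,\mathbf{v}_m)$: $\mathbf{v}_k^\star=\mathbf{v}_k-\sum_{j<k}\mu_{k,j}\mathbf{v}_j^\star$ with $\mu_{k,j}=\frac{\mathbf{v}_k\cdot\mathbf{v}_j^\star}{\mathbf{v}_j^\star\cdot\mathbf{v}_j^\star}$. *)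

theory Defs
  imports "HOL-Analysis.Analysis" "HOL-Computational_Algebra.Primes" "HOL-Library.Infinite_Set"
begin

text \<open>Vectors in R^n are represented as functions nat => real, coordinates 1..n
  (values outside {1..n} are irrelevant). Euclidean inner product on coordinates 1..n.\<close>
definition ipn :: "nat \<Rightarrow> (nat \<Rightarrow> real) \<Rightarrow> (nat \<Rightarrow> real) \<Rightarrow> real" where
  "ipn n x y = (\<Sum>i=1..n. x i * y i)"

definition sqnorm :: "nat \<Rightarrow> (nat \<Rightarrow> real) \<Rightarrow> real" where
  "sqnorm n x = (\<Sum>i=1..n. (x i)^2)"

function gso :: "nat \<Rightarrow> (nat \<Rightarrow> nat \<Rightarrow> real) \<Rightarrow> nat \<Rightarrow> nat \<Rightarrow> real" where
  "gso n v k = (\<lambda>i. v k i - (\<Sum>j\<in>{1..<k}.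
      (ipn n (v k) (gso n v j) / ipn n (gso n v j) (gso n v j)) * gso n v j i))"
  by pat_completeness auto
termination by (relation "Wellfounded.measure (\<lambda>(n, v, k). k)") auto

text \<open>The k-th prime, 1-based: nth_prime 1 = 2, nth_prime 2 = 3, ...\<close>
definition nth_prime :: "nat \<Rightarrow> nat" where
  "nth_prime k = enumerate {q::nat. prime q} (k - 1)"

end

theory Submission
  imports Defs
begin

text \<open>The vectors form an arrowhead matrix: with n = d + 1 they are
  v_k = a_k e_k + c_k e_n for k < n and v_n = c_n e_n, where a_k = (ln p_k)^(1/p), c_k = C ln p_k
  and c_n = C ln N. Put w_i = c_i / a_i (here C (ln p_i)^(1 - 1/p)), so that D_j = 1 + sum_{i<=j} w_i^2.
  By strong induction on k the Gram-Schmidt vectors are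
  v*_k = a_k e_k + (c_k / D_(k-1)) (e_n - sum_{i<k} w_i e_i):
  the coefficients are mu_(k,j) = c_k w_j / (a_j D_j), and their sum telescopes because
  w_j^2 / (D_(j-1) D_j) = 1/D_(j-1) - 1/D_j. The norms and the projection are read off this closed form.\<close>

declare gso.simps [simp del]

locale arrowhead_family =
  fixes n :: nat and a c :: "nat \<Rightarrow> real" and v :: "nat \<Rightarrow> nat \<Rightarrow> real"
  assumes a_nonzero: "\<And>k. 1 \<le> k \<Longrightarrow> k < n \<Longrightarrow> a k \<noteq> 0"
    and v_eq: "\<And>k i. 1 \<le> k \<Longrightarrow> k \<le> n \<Longrightarrow>
      v k i = (if i = k \<and> k < n then a k else if i = n then c k else 0)"
begin

definition w :: "nat \<Rightarrow> real" where
  "w i = c i / a i"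

definition D :: "nat \<Rightarrow> real" where
  "D j = 1 + (\<Sum>i=1..j. (w i)^2)"

lemma D_pos: "D j > 0"
  by (simp add: D_def sum_nonneg add_pos_nonneg)

lemma D_pred: "1 \<le> j \<Longrightarrow> D j = D (j - 1) + (w j)^2"
  by (cases j) (simp_all add: D_def)

lemma c_eq_a_mult_w: "1 \<le> k \<Longrightarrow> k < n \<Longrightarrow> c k = a k * w k"
  using a_nonzero by (simp add: w_def)

lemma sum_w2_div_D_telescope:
  assumes "i \<le> m"
  shows "(\<Sum>j\<in>{Suc i..m}. (w j)^2 / (D (j - 1) * D j)) = 1 / D i - 1 / D m"
proof -
  have "(w j)^2 / (D (j - 1) * D j) = (- 1 / D j) - (- 1 / D (j - 1))" if "j \<ge> 1" for j
    using that D_pred [of j] D_pos [of j] D_pos [of "j - 1"] by (simp add: field_simps)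
  then have "(\<Sum>j\<in>{Suc i..m}. (w j)^2 / (D (j - 1) * D j))
      = (\<Sum>j\<in>{Suc i..m}. (- 1 / D j) - (- 1 / D (j - 1)))"
    by (intro sum.cong) auto
  also have "\<dots> = 1 / D i - 1 / D m"
    using sum_telescope'' [OF assms, of "\<lambda>j. - 1 / D j"] by simp
  finally show ?thesis .
qed

definition gso_closed :: "nat \<Rightarrow> nat \<Rightarrow> real" where
  "gso_closed k i = (if i < k then - (c k * w i) / D (k - 1)
     else if i = k \<and> k < n then a k
     else if i < n then 0
     else c k / D (k - 1))"

lemma ipn_v_gso_closed:
  assumes "1 \<le> j" "j < k" "k \<le> n"
  shows "ipn n (v k) (gso_closed j) = c k * c j / D (j - 1)"
proof -
  have "(\<Sum>i\<in>{1..<n}. v k i * gso_closed j i) = 0"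
    by (rule sum.neutral) (use assms in \<open>auto simp: v_eq gso_closed_def\<close>)
  moreover have "v k n * gso_closed j n = c k * c j / D (j - 1)"
    using assms by (simp add: v_eq gso_closed_def)
  ultimately show ?thesis
    using assms by (simp add: ipn_def sum.last_plus)
qed

lemma ipn_gso_closed_self:
  assumes "1 \<le> j" "j \<le> n"
  shows "ipn n (gso_closed j) (gso_closed j) =
    (if j < n then (a j)^2 * D j / D (j - 1) else (c j)^2 / D (j - 1))"
proof -
  let ?g = "\<lambda>i. gso_closed j i * gso_closed j i"
  have "(\<Sum>i\<in>{1..<j}. ?g i) = (c j / D (j - 1))^2 * (\<Sum>i=1..j-1. (w i)^2)"
    unfolding sum_distrib_left using assms
    by (intro sum.cong) (auto simp: gso_closed_def power2_eq_square)
  also have "\<dots> = (c j / D (j - 1))^2 * (D (j - 1) - 1)"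
    by (simp add: D_def)
  finally have front: "(\<Sum>i\<in>{1..<j}. ?g i) = (c j / D (j - 1))^2 * (D (j - 1) - 1)" .
  have "(\<Sum>i\<in>{j..<n}. ?g i) = (\<Sum>i\<in>{j..<n}. if i = j then (a j)^2 else 0)"
    by (intro sum.cong) (auto simp: gso_closed_def power2_eq_square)
  then have middle: "(\<Sum>i\<in>{j..<n}. ?g i) = (if j < n then (a j)^2 else 0)"
    by simp
  have last: "?g n = (c j / D (j - 1))^2"
    using assms by (simp add: gso_closed_def power2_eq_square)
  have "ipn n (gso_closed j) (gso_closed j) = ?g n + ((\<Sum>i\<in>{1..<j}. ?g i) + (\<Sum>i\<in>{j..<n}. ?g i))"
    using assms by (simp add: ipn_def sum.last_plus sum.atLeastLessThan_concat)
  also have "\<dots> = (if j < n then (a j)^2 else 0) + (c j)^2 / D (j - 1)"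
    unfolding front middle last using D_pos [of "j - 1"]
    by (simp add: field_simps power2_eq_square)
  also have "\<dots> = (if j < n then (a j)^2 * D j / D (j - 1) else (c j)^2 / D (j - 1))"
    using assms D_pred [of j] c_eq_a_mult_w [of j] D_pos [of "j - 1"]
    by (auto simp: field_simps power2_eq_square)
  finally show ?thesis .
qed

lemma gso_coeff_closed:
  assumes "1 \<le> j" "j < k" "k \<le> n"
  shows "ipn n (v k) (gso_closed j) / ipn n (gso_closed j) (gso_closed j) = c k * w j / (a j * D j)"
proof -
  have j: "1 \<le> j" "j < n" using assms by auto
  have self: "ipn n (gso_closed j) (gso_closed j) = (a j)^2 * D j / D (j - 1)"
    using ipn_gso_closed_self [of j] j by simp
  have "ipn n (v k) (gso_closed j) = c k * a j * w j / D (j - 1)"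
    using ipn_v_gso_closed [OF assms] c_eq_a_mult_w [OF j] by simp
  then show ?thesis
    unfolding self using a_nonzero [OF j] D_pos [of j] D_pos [of "j - 1"]
    by (simp add: field_simps power2_eq_square)
qed

lemma gso_closed_tail:
  assumes "1 \<le> j" "i < j" "j < n"
  shows "w j / (a j * D j) * gso_closed j i = - w i * ((w j)^2 / (D (j - 1) * D j))"
  using assms a_nonzero [of j] c_eq_a_mult_w [of j]
  by (simp add: gso_closed_def field_simps power2_eq_square)

lemma sum_coeff_gso_closed:
  assumes "1 \<le> k" "k \<le> n" "1 \<le> i" "i \<le> n"
  shows "(\<Sum>j\<in>{1..<k}. w j / (a j * D j) * gso_closed j i) =
     (if i < k then w i / D (k - 1) else if i < n then 0 else 1 - 1 / D (k - 1))"
proof -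
  let ?f = "\<lambda>j. w j / (a j * D j) * gso_closed j i"
  consider "i < k" | "k \<le> i" "i < n" | "i = n" "k \<le> i" using assms by fastforce
  then show ?thesis
  proof cases
    case 1
    have "(\<Sum>j\<in>{1..<i}. ?f j) = 0"
      by (rule sum.neutral) (use 1 assms in \<open>auto simp: gso_closed_def\<close>)
    moreover have "?f i = w i / D i"
      using 1 assms a_nonzero [of i] by (simp add: gso_closed_def)
    moreover have "(\<Sum>j\<in>{Suc i..<k}. ?f j) = - w i * (1 / D i - 1 / D (k - 1))"
    proof -
      have "(\<Sum>j\<in>{Suc i..<k}. ?f j) = (\<Sum>j\<in>{Suc i..k-1}. - w i * ((w j)^2 / (D (j - 1) * D j)))"
      proof (rule sum.cong)
        fix j assume "j \<in> {Suc i..k-1}"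
        then show "?f j = - w i * ((w j)^2 / (D (j - 1) * D j))"
          by (intro gso_closed_tail) (use 1 assms in auto)
      qed (use 1 in auto)
      also have "\<dots> = - w i * (1 / D i - 1 / D (k - 1))"
        unfolding sum_distrib_left [symmetric] using 1 sum_w2_div_D_telescope [of i "k - 1"] by simp
      finally show ?thesis .
    qed
    moreover have "(\<Sum>j\<in>{1..<k}. ?f j) = (\<Sum>j\<in>{1..<i}. ?f j) + (\<Sum>j\<in>{i..<k}. ?f j)"
      by (rule sum.atLeastLessThan_concat [symmetric]) (use 1 assms in auto)
    moreover have "(\<Sum>j\<in>{i..<k}. ?f j) = ?f i + (\<Sum>j\<in>{Suc i..<k}. ?f j)"
      by (rule sum.atLeast_Suc_lessThan) (use 1 in simp)
    ultimately have "(\<Sum>j\<in>{1..<k}. ?f j) = w i / D i - w i * (1 / D i - 1 / D (k - 1))"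
      by simp
    then show ?thesis
      using 1 by (simp add: field_simps)
  next
    case 2
    have "(\<Sum>j\<in>{1..<k}. ?f j) = 0"
      by (rule sum.neutral) (use 2 in \<open>auto simp: gso_closed_def\<close>)
    then show ?thesis using 2 by simp
  next
    case 3
    have "(\<Sum>j\<in>{1..<k}. ?f j) = (\<Sum>j\<in>{Suc 0..k-1}. (w j)^2 / (D (j - 1) * D j))"
      using 3 assms a_nonzero c_eq_a_mult_w
      by (intro sum.cong) (auto simp: gso_closed_def field_simps power2_eq_square)
    also have "\<dots> = 1 - 1 / D (k - 1)"
      using sum_w2_div_D_telescope [of 0 "k - 1"] by (simp add: D_def)
    finally show ?thesis using 3 assms by simp
  qed
qed

lemma gso_eq_closed:
  "1 \<le> k \<Longrightarrow> k \<le> n \<Longrightarrow> i \<in> {1..n} \<Longrightarrow> gso n v k i = gso_closed k i"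
proof (induction k arbitrary: i rule: less_induct)
  case (less k)
  have IH: "gso n v j i = gso_closed j i" if "j \<in> {1..<k}" "i \<in> {1..n}" for j i
    using less that by auto
  have "gso n v k i = v k i - (\<Sum>j\<in>{1..<k}.
      ipn n (v k) (gso n v j) / ipn n (gso n v j) (gso n v j) * gso n v j i)"
    by (subst gso.simps) simp
  also have "\<dots> = v k i - (\<Sum>j\<in>{1..<k}. c k * w j / (a j * D j) * gso_closed j i)"
  proof -
    have "ipn n x (gso n v j) = ipn n x (gso_closed j)"
      "ipn n (gso n v j) x = ipn n (gso_closed j) x" "gso n v j i = gso_closed j i"
      if "j \<in> {1..<k}" for x j
      using that IH less.prems(3) by (auto simp: ipn_def intro: sum.cong)
    then show ?thesis
      using less.prems gso_coeff_closed by (intro arg_cong2 [where f = "(-)"] sum.cong) auto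
  qed
  also have "\<dots> = v k i - c k * (\<Sum>j\<in>{1..<k}. w j / (a j * D j) * gso_closed j i)"
    by (simp add: sum_distrib_left mult.assoc)
  also have "\<dots> = gso_closed k i"
    using sum_coeff_gso_closed [of k i] less.prems D_pos [of "k - 1"]
    by (auto simp: v_eq gso_closed_def field_simps)
  finally show ?case .
qed

lemma sqnorm_gso:
  assumes "1 \<le> k" "k \<le> n"
  shows "sqnorm n (gso n v k) = (if k < n then (a k)^2 * D k / D (k - 1) else (c k)^2 / D (k - 1))"
proof -
  have "sqnorm n (gso n v k) = ipn n (gso_closed k) (gso_closed k)"
    unfolding sqnorm_def ipn_def using assms
    by (intro sum.cong) (auto simp: gso_eq_closed power2_eq_square)
  then show ?thesis
    using ipn_gso_closed_self [OF assms] by simp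
qed

lemma v_last_minus_gso:
  assumes "1 \<le> n" "1 \<le> i" "i \<le> n"
  shows "v n i - gso n v n i = (if i < n then c n * w i / D (n - 1) else c n * (D (n - 1) - 1) / D (n - 1))"
  using assms gso_eq_closed [of n i] D_pos [of "n - 1"]
  by (auto simp: v_eq gso_closed_def field_simps)

end

lemma ln_nth_prime_pos: "ln (real (nth_prime k)) > 0"
proof -
  have "prime (nth_prime k)"
    unfolding nth_prime_def using enumerate_in_set [OF primes_infinite] by simp
  then have "nth_prime k \<ge> 2"
    by (rule prime_ge_2_nat)
  then show ?thesis
    by simp
qed

theorem theorem4:
  fixes d N :: nat and C p :: real
    and b :: "nat \<Rightarrow> nat \<Rightarrow> real" and t :: "nat \<Rightarrow> real" and v :: "nat \<Rightarrow> nat \<Rightarrow> real" and D :: "nat \<Rightarrow> real"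
  assumes hd: "d \<ge> 1" and hN: "N \<ge> 1" and hC: "C > 0" and hp: "p \<ge> 1"
    and b_def: "\<And>k i. b k i = (if i = k then (ln (real (nth_prime k))) powr (1/p)
                  else if i = d + 1 then C * ln (real (nth_prime k)) else 0)"
    and t_def: "\<And>i. t i = (if i = d + 1 then C * ln (real N) else 0)"
    and v_def: "\<And>k. v k = (if k \<le> d then b k else t)"
    and D_def: "\<And>j. D j = 1 + C^2 * (\<Sum>i=1..j. (ln (real (nth_prime i))) powr (2 - 2/p))"
  shows
    "(\<forall>k\<in>{1..d}. \<forall>i\<in>{1..d+1}.
        gso (d+1) v k i =
          (if i < k then - (C^2 * ln (real (nth_prime k)) * (ln (real (nth_prime i))) powr (1 - 1/p)) / D (k - 1)
           else if i = k then (ln (real (nth_prime k))) powr (1/p)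
           else if i < d + 1 then 0
           else C * ln (real (nth_prime k)) / D (k - 1)))
   \<and> (\<forall>i\<in>{1..d+1}.
        gso (d+1) v (d+1) i =
          (if i < d + 1 then - (C^2 * ln (real N) * (ln (real (nth_prime i))) powr (1 - 1/p)) / D d
           else C * ln (real N) / D d))
   \<and> (\<forall>k\<in>{1..d}. sqnorm (d+1) (gso (d+1) v k) =
          (ln (real (nth_prime k))) powr (2/p) * D k / D (k - 1))
   \<and> sqnorm (d+1) (gso (d+1) v (d+1)) = (C * ln (real N))^2 / D d
   \<and> (\<forall>i\<in>{1..d+1}.
        t i - gso (d+1) v (d+1) i =
          (if i < d + 1 then C^2 * ln (real N) * (ln (real (nth_prime i))) powr (1 - 1/p) / D d
           else C * ln (real N) * (D d - 1) / D d))"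
proof -
  define L where "L k = ln (real (nth_prime k))" for k
  have L_pos: "L k > 0" for k
    unfolding L_def by (rule ln_nth_prime_pos)
  then have L_nonzero: "L k \<noteq> 0" for k
    by (metis less_irrefl)
  define a where "a k = L k powr (1/p)" for k
  define c where "c k = (if k \<le> d then C * L k else C * ln (real N))" for k
  interpret A: arrowhead_family "d + 1" a c v
    by unfold_locales (auto simp: a_def c_def v_def b_def t_def L_def [symmetric] L_nonzero)
  have w_eq: "A.w i = C * L i powr (1 - 1/p)" if "1 \<le> i" "i \<le> d" for i
    using that L_pos [of i] by (simp add: A.w_def a_def c_def powr_diff)
  have D_eq: "A.D j = D j" if "j \<le> d" for j
  proof -
    have "(A.w i)^2 = C^2 * L i powr (2 - 2/p)" if "1 \<le> i" "i \<le> d" for i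
      using that by (simp add: w_eq power_mult_distrib powr_add [symmetric] power2_eq_square)
    then show ?thesis
      using that by (simp add: A.D_def D_def L_def sum_distrib_left)
  qed
  have a_sq: "(a k)^2 = L k powr (2/p)" for k
    by (simp add: a_def power2_eq_square powr_add [symmetric])
  have gso_front: "gso (d+1) v k i = (if i < k then - (C^2 * L k * L i powr (1 - 1/p)) / D (k - 1)
      else if i = k then L k powr (1/p) else if i < d + 1 then 0 else C * L k / D (k - 1))"
    if "k \<in> {1..d}" "i \<in> {1..d+1}" for k i
  proof -
    have "A.D (k - 1) = D (k - 1)"
      by (rule D_eq) (use that in auto)
    then show ?thesis
      using that A.gso_eq_closed [of k i] unfolding A.gso_closed_def
      by (simp add: w_eq a_def c_def power2_eq_square)
  qed
  have gso_last: "gso (d+1) v (d+1) i = (if i < d + 1 then - (C^2 * ln (real N) * L i powr (1 - 1/p)) / D d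
      else C * ln (real N) / D d)" if "i \<in> {1..d+1}" for i
    using that A.gso_eq_closed [of "d+1" i] unfolding A.gso_closed_def
    by (simp add: w_eq D_eq c_def power2_eq_square)
  have projection: "t i - gso (d+1) v (d+1) i = (if i < d + 1 then C^2 * ln (real N) * L i powr (1 - 1/p) / D d
      else C * ln (real N) * (D d - 1) / D d)" if "i \<in> {1..d+1}" for i
  proof -
    have "v (d+1) i = t i"
      by (simp add: v_def)
    then show ?thesis
      using that A.v_last_minus_gso [of i] D_eq [of d] by (simp add: w_eq c_def power2_eq_square)
  qed
  have sqnorm_front: "sqnorm (d+1) (gso (d+1) v k) = L k powr (2/p) * D k / D (k - 1)" if "k \<in> {1..d}" for k
  proof -
    have "A.D (k - 1) = D (k - 1)" "A.D k = D k"
      by (rule D_eq, use that in auto)+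
    then show ?thesis
      using that A.sqnorm_gso [of k] by (simp add: a_sq)
  qed
  have sqnorm_last: "sqnorm (d+1) (gso (d+1) v (d+1)) = (C * ln (real N))^2 / D d"
    using A.sqnorm_gso [of "d+1"] D_eq [of d] by (simp add: c_def)
  show ?thesis
    using gso_front gso_last projection sqnorm_front sqnorm_last unfolding L_def
    by (intro conjI ballI) simp_all
qed

end
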